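(* Let $P$ be a program which is safe w.r.t. a mode $M$ and satisfies $M$, and whose non-unit clauses are pairwise mutually exclusive w.r.t. $M$. Then for any non-basic atom $A_0$ which satisfies $M$ and any basic goal $G_0$, there exists at most one goal $(A_1,G_1)$ such that $A_1$ is a non-basic atom and $(A_0,G_0)\Rightarrow_P(A_1,G_1)$.
   Context: Syntax. Predicate symbols $\mathit{true}$, $=$, $\neq$ are basic, all others non-basic; the set of function symbols is infinite. Basic atoms: $\mathit{true}$, $t_1=t_2$, $t_1\neq t_2$ (disequation); non-basic atoms $p(t_1,\dots,t_m)$, $p$ non-basic. A goal is a conjunction of atoms ("," associative, neutral element $\mathit{true}$); it is basic if all its atoms are basic. A clause $C$ is $A\leftarrow G$ with non-basic head $hd(C)$ and body $bd(C)$; it is a unit clause iff its body is basic. A program is a set of clauses. All mgu's are relevant and idempotent. A variable $X$ is a local variable of goal $G$ in clause $H\leftarrow G_1,G,G_2$ iff $X\in vars(G)-vars(H,G_1,G_2)$. Operational semantics (program $P$): (1) $(t_1=t_2,G)\longmapsto_P G\vartheta$ if $t_1,t_2$ unify with mgu $\vartheta$; (2) $(t_1\neq t_2,G)\longmapsto_P G$ if not unifiable; (3) $(A,G)\longmapsto_P(bd(C),G)\vartheta$ if $A$ is non-basic, $C$ a renamed apart clause of $P$ and $\vartheta$ an mgu of $A$ and $hd(C)$ (a step using $C$). $\longmapsto^*_P$ is the reflexive-transitive closure. For $C\in P$ and $A_0$ non-basic, $(A_0,G_0)\Rightarrow_C(A_n,G_n)$ iff there is a derivation $(A_0,G_0)\longmapsto_P\cdots\longmapsto_P(A_n,G_n)$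 with $n>0$ whose first step uses $C$, with $A_i$ basic for $0<i<n$, and either $A_n$ non-basic or $(A_n,G_n)=\mathit{true}$. $(A_0,G_0)\Rightarrow_P G'$ iff $(A_0,G_0)\Rightarrow_C G'$ for some $C\in P$. Modes. A mode for non-basic $p$ of arity $h$ is $p(m_1,\dots,m_h)$, $m_i\in\{+,?\}$; $t_i$ is an input argument iff $m_i=+$; variables in input arguments are input variables. A mode for a program contains exactly one mode per non-basic predicate occurring in it. An atom satisfies $M$ iff $M$ has a mode for its predicate and its input arguments are ground. $P$ satisfies $M$ iff for every non-basic $A_0$ satisfying $M$ and every non-basic $A$ and goal $G$ with $A_0\longmapsto^*_P(A,G)$, $A$ satisfies $M$. A clause $C$ is safe w.r.t. $M$ iff every variable of every disequation in $bd(C)$ is an input variable of $hd(C)$ or a local variable of that disequation in $C$; a program is safe iff all its clauses are. Satisfiability. A ground basic goal holds iff each atom is $\mathit{true}$, $t=t$, or $t_1\neq t_2$ with $t_1,t_2$ distinct ground terms. A conjunction $D$ of disequations is satisfiable w.r.t. a set $V$ of variables iff there is a ground substitution $\sigma$ with domain $V$ such that every ground instance of $D\sigma$ holds. Guard. $grd(C)=bd(C)$ if all atoms of $bd(C)$ are disequations; otherwise it is the conjunction of disequations of $bd(C)$ to the left of the leftmost atom that is not a disequation. Mutual exclusion. For renamed apart clauses $C_1: p(t_1,u_1)\leftarrow G_1$ and $C_2: p(t_2,u_2)\leftarrow G_2$, where $t_1,t_2$ are the tuples of input arguments of $p$ under $M$ and $u_1,u_2$ the remaining arguments, $C_1,C_2$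 are mutually exclusive w.r.t. $M$ iff either $t_1,t_2$ are not unifiable, or they are unifiable via an mgu $\vartheta$ and $(grd(C_1),grd(C_2))\vartheta$ is not satisfiable w.r.t. $vars(t_1,t_2)$ (empty tuples unify via the identity). *)

theory Defs
  imports Main
begin

datatype ('f,'v) trm = Var 'v | Fn 'f "('f,'v) trm list"

fun vars_trm :: "('f,'v) trm \<Rightarrow> 'v set" where
  "vars_trm (Var x) = {x}"
| "vars_trm (Fn f ts) = (\<Union>t\<in>set ts. vars_trm t)"

type_synonym ('f,'v) subst = "'v \<Rightarrow> ('f,'v) trm"

fun subst_trm :: "('f,'v) subst \<Rightarrow> ('f,'v) trm \<Rightarrow> ('f,'v) trm" where
  "subst_trm \<sigma> (Var x) = \<sigma> x"
| "subst_trm \<sigma> (Fn f ts) = Fn f (map (subst_trm \<sigma>) ts)"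

definition ground_trm :: "('f,'v) trm \<Rightarrow> bool" where
  "ground_trm t \<longleftrightarrow> vars_trm t = {}"

definition vars_trms :: "('f,'v) trm list \<Rightarrow> 'v set" where
  "vars_trms ts = (\<Union>t\<in>set ts. vars_trm t)"

text \<open>Atoms. The basic atom true is the neutral element of conjunction and is
  represented by the empty goal (goals are lists of the remaining atoms).\<close>
datatype ('p,'f,'v) atm =
    Eq "('f,'v) trm" "('f,'v) trm"
  | Neq "('f,'v) trm" "('f,'v) trm"
  | Pred 'p "('f,'v) trm list"

type_synonym ('p,'f,'v) goal = "('p,'f,'v) atm list"

fun basic_atm :: "('p,'f,'v) atm \<Rightarrow> bool" where
  "basic_atm (Eq s t) = True"
| "basic_atm (Neq s t) = True"
| "basic_atm (Pred p ts) = False"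

fun is_neq :: "('p,'f,'v) atm \<Rightarrow> bool" where
  "is_neq (Neq s t) = True"
| "is_neq _ = False"

fun vars_atm :: "('p,'f,'v) atm \<Rightarrow> 'v set" where
  "vars_atm (Eq s t) = vars_trm s \<union> vars_trm t"
| "vars_atm (Neq s t) = vars_trm s \<union> vars_trm t"
| "vars_atm (Pred p ts) = vars_trms ts"

fun subst_atm :: "('f,'v) subst \<Rightarrow> ('p,'f,'v) atm \<Rightarrow> ('p,'f,'v) atm" where
  "subst_atm \<sigma> (Eq s t) = Eq (subst_trm \<sigma> s) (subst_trm \<sigma> t)"
| "subst_atm \<sigma> (Neq s t) = Neq (subst_trm \<sigma> s) (subst_trm \<sigma> t)"
| "subst_atm \<sigma> (Pred p ts) = Pred p (map (subst_trm \<sigma>) ts)"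

definition vars_goal :: "('p,'f,'v) goal \<Rightarrow> 'v set" where
  "vars_goal G = (\<Union>A\<in>set G. vars_atm A)"

definition subst_goal :: "('f,'v) subst \<Rightarrow> ('p,'f,'v) goal \<Rightarrow> ('p,'f,'v) goal" where
  "subst_goal \<sigma> G = map (subst_atm \<sigma>) G"

definition basic_goal :: "('p,'f,'v) goal \<Rightarrow> bool" where
  "basic_goal G \<longleftrightarrow> (\<forall>A\<in>set G. basic_atm A)"

definition ground_goal :: "('p,'f,'v) goal \<Rightarrow> bool" where
  "ground_goal G \<longleftrightarrow> vars_goal G = {}"

datatype ('p,'f,'v) clause = Clause 'p "('f,'v) trm list" "('p,'f,'v) goal"

fun cl_head :: "('p,'f,'v) clause \<Rightarrow> ('p,'f,'v) atm" where
  "cl_head (Clause p ts B) = Pred p ts"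

fun cl_body :: "('p,'f,'v) clause \<Rightarrow> ('p,'f,'v) goal" where
  "cl_body (Clause p ts B) = B"

definition vars_cl :: "('p,'f,'v) clause \<Rightarrow> 'v set" where
  "vars_cl C = vars_atm (cl_head C) \<union> vars_goal (cl_body C)"

fun subst_cl :: "('f,'v) subst \<Rightarrow> ('p,'f,'v) clause \<Rightarrow> ('p,'f,'v) clause" where
  "subst_cl \<sigma> (Clause p ts B) = Clause p (map (subst_trm \<sigma>) ts) (subst_goal \<sigma> B)"

definition unit_clause :: "('p,'f,'v) clause \<Rightarrow> bool" where
  "unit_clause C \<longleftrightarrow> basic_goal (cl_body C)"

definition subst_dom :: "('f,'v) subst \<Rightarrow> 'v set" where
  "subst_dom \<sigma> = {x. \<sigma> x \<noteq> Var x}"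

definition subst_range_vars :: "('f,'v) subst \<Rightarrow> 'v set" where
  "subst_range_vars \<sigma> = (\<Union>x\<in>subst_dom \<sigma>. vars_trm (\<sigma> x))"

definition unifiable_list :: "('f,'v) trm list \<Rightarrow> ('f,'v) trm list \<Rightarrow> bool" where
  "unifiable_list ss ts \<longleftrightarrow> length ss = length ts \<and>
     (\<exists>\<sigma>. map (subst_trm \<sigma>) ss = map (subst_trm \<sigma>) ts)"

definition is_mgu_list :: "('f,'v) subst \<Rightarrow> ('f,'v) trm list \<Rightarrow> ('f,'v) trm list \<Rightarrow> bool" where
  "is_mgu_list \<theta> ss ts \<longleftrightarrow> length ss = length ts
     \<and> map (subst_trm \<theta>) ss = map (subst_trm \<theta>) ts
     \<and> (\<forall>\<sigma>. map (subst_trm \<sigma>) ss = map (subst_trm \<sigma>) ts \<longrightarrow>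
            (\<exists>\<tau>. \<forall>x. \<sigma> x = subst_trm \<tau> (\<theta> x)))
     \<and> (\<forall>x. subst_trm \<theta> (\<theta> x) = \<theta> x)
     \<and> subst_dom \<theta> \<union> subst_range_vars \<theta> \<subseteq> vars_trms ss \<union> vars_trms ts"

fun is_mgu_atm :: "('f,'v) subst \<Rightarrow> ('p,'f,'v) atm \<Rightarrow> ('p,'f,'v) atm \<Rightarrow> bool" where
  "is_mgu_atm \<theta> (Pred p ts) (Pred q us) \<longleftrightarrow> p = q \<and> is_mgu_list \<theta> ts us"
| "is_mgu_atm \<theta> _ _ \<longleftrightarrow> False"

definition variant_cl :: "('p,'f,'v) clause \<Rightarrow> ('p,'f,'v) clause \<Rightarrow> bool" where
  "variant_cl C' C \<longleftrightarrow> (\<exists>\<pi>. bij \<pi> \<and> C' = subst_cl (\<lambda>x. Var (\<pi> x)) C)"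

definition variant_goal :: "('p,'f,'v) goal \<Rightarrow> ('p,'f,'v) goal \<Rightarrow> bool" where
  "variant_goal G' G \<longleftrightarrow> (\<exists>\<pi>. bij \<pi> \<and> G' = subst_goal (\<lambda>x. Var (\<pi> x)) G)"

definition basic_step :: "('p,'f,'v) goal \<Rightarrow> ('p,'f,'v) goal \<Rightarrow> bool" where
  "basic_step g g' \<longleftrightarrow>
     (\<exists>t1 t2 G \<theta>. g = Eq t1 t2 # G \<and> is_mgu_list \<theta> [t1] [t2] \<and> g' = subst_goal \<theta> G)
   \<or> (\<exists>t1 t2. g = Neq t1 t2 # g' \<and> \<not> unifiable_list [t1] [t2])"

definition clause_step :: "('p,'f,'v) clause \<Rightarrow> ('p,'f,'v) goal \<Rightarrow> ('p,'f,'v) goal \<Rightarrow> bool" where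
  "clause_step C g g' \<longleftrightarrow>
     (\<exists>A G C' \<theta>. g = A # G \<and> \<not> basic_atm A \<and> variant_cl C' C
        \<and> vars_cl C' \<inter> vars_goal g = {}
        \<and> is_mgu_atm \<theta> A (cl_head C')
        \<and> g' = subst_goal \<theta> (cl_body C' @ G))"

definition step :: "('p,'f,'v) clause set \<Rightarrow> ('p,'f,'v) goal \<Rightarrow> ('p,'f,'v) goal \<Rightarrow> bool" where
  "step P g g' \<longleftrightarrow> basic_step g g' \<or> (\<exists>C\<in>P. clause_step C g g')"

definition steps :: "('p,'f,'v) clause set \<Rightarrow> ('p,'f,'v) goal \<Rightarrow> ('p,'f,'v) goal \<Rightarrow> bool" where
  "steps P = (step P)\<^sup>*\<^sup>*"

definition derives_C :: "('p,'f,'v) clause set \<Rightarrow> ('p,'f,'v) clause \<Rightarrow> ('p,'f,'v) goal \<Rightarrow> ('p,'f,'v) goal \<Rightarrow> bool" where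
  "derives_C P C g g' \<longleftrightarrow> C \<in> P \<and> g \<noteq> [] \<and> \<not> basic_atm (hd g) \<and>
     (\<exists>n f. n > 0 \<and> f 0 = g \<and> f n = g'
        \<and> (\<forall>i<n. step P (f i) (f (Suc i)))
        \<and> clause_step C (f 0) (f 1)
        \<and> (\<forall>i. 0 < i \<and> i < n \<longrightarrow> f i \<noteq> [] \<and> basic_atm (hd (f i)))
        \<and> (g' = [] \<or> \<not> basic_atm (hd g')))"

definition derives :: "('p,'f,'v) clause set \<Rightarrow> ('p,'f,'v) goal \<Rightarrow> ('p,'f,'v) goal \<Rightarrow> bool" where
  "derives P g g' \<longleftrightarrow> (\<exists>C\<in>P. derives_C P C g g')"

text \<open>A mode assigns to a predicate symbol p of arity h (the pair (p,h)) a list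
  of h flags; True means '+' (input), False means '?'.\<close>
type_synonym 'p mode = "'p \<times> nat \<Rightarrow> bool list option"

definition has_mode :: "'p mode \<Rightarrow> 'p \<Rightarrow> ('f,'v) trm list \<Rightarrow> bool" where
  "has_mode M p ts \<longleftrightarrow> (\<exists>ms. M (p, length ts) = Some ms \<and> length ms = length ts)"

definition input_args :: "'p mode \<Rightarrow> 'p \<Rightarrow> ('f,'v) trm list \<Rightarrow> ('f,'v) trm list" where
  "input_args M p ts = map snd (filter fst (zip (the (M (p, length ts))) ts))"

fun atm_sat :: "'p mode \<Rightarrow> ('p,'f,'v) atm \<Rightarrow> bool" where
  "atm_sat M (Pred p ts) \<longleftrightarrow> has_mode M p ts \<and> (\<forall>t\<in>set (input_args M p ts). ground_trm t)"
| "atm_sat M _ \<longleftrightarrow> False"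

definition mode_for :: "'p mode \<Rightarrow> ('p,'f,'v) clause set \<Rightarrow> bool" where
  "mode_for M P \<longleftrightarrow> (\<forall>C\<in>P. \<forall>A\<in>insert (cl_head C) (set (cl_body C)).
      \<forall>p ts. A = Pred p ts \<longrightarrow> has_mode M p ts)"

definition prog_satisfies :: "'p mode \<Rightarrow> ('p,'f,'v) clause set \<Rightarrow> bool" where
  "prog_satisfies M P \<longleftrightarrow> (\<forall>A0 A G. \<not> basic_atm A0 \<longrightarrow> atm_sat M A0 \<longrightarrow>
      steps P [A0] (A # G) \<longrightarrow> \<not> basic_atm A \<longrightarrow> atm_sat M A)"

fun head_input_vars :: "'p mode \<Rightarrow> ('p,'f,'v) clause \<Rightarrow> 'v set" where
  "head_input_vars M (Clause p ts B) = vars_trms (input_args M p ts)"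

definition local_var :: "('p,'f,'v) clause \<Rightarrow> nat \<Rightarrow> 'v \<Rightarrow> bool" where
  "local_var C i x \<longleftrightarrow> x \<in> vars_atm (cl_body C ! i) \<and> x \<notin> vars_atm (cl_head C)
     \<and> (\<forall>j<length (cl_body C). j \<noteq> i \<longrightarrow> x \<notin> vars_atm (cl_body C ! j))"

definition safe_clause :: "'p mode \<Rightarrow> ('p,'f,'v) clause \<Rightarrow> bool" where
  "safe_clause M C \<longleftrightarrow> (\<forall>i<length (cl_body C). \<forall>t1 t2. cl_body C ! i = Neq t1 t2 \<longrightarrow>
      (\<forall>x\<in>vars_trm t1 \<union> vars_trm t2. x \<in> head_input_vars M C \<or> local_var C i x))"

definition safe_prog :: "'p mode \<Rightarrow> ('p,'f,'v) clause set \<Rightarrow> bool" where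
  "safe_prog M P \<longleftrightarrow> (\<forall>C\<in>P. safe_clause M C)"

fun holds_atm :: "('p,'f,'v) atm \<Rightarrow> bool" where
  "holds_atm (Eq s t) \<longleftrightarrow> s = t"
| "holds_atm (Neq s t) \<longleftrightarrow> s \<noteq> t"
| "holds_atm (Pred p ts) \<longleftrightarrow> False"

definition holds_goal :: "('p,'f,'v) goal \<Rightarrow> bool" where
  "holds_goal G \<longleftrightarrow> (\<forall>A\<in>set G. holds_atm A)"

definition satisfiable_wrt :: "('p,'f,'v) goal \<Rightarrow> 'v set \<Rightarrow> bool" where
  "satisfiable_wrt D V \<longleftrightarrow> (\<exists>\<sigma>. (\<forall>x\<in>V. ground_trm (\<sigma> x)) \<and> (\<forall>x. x \<notin> V \<longrightarrow> \<sigma> x = Var x)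
     \<and> (\<forall>\<tau>. ground_goal (subst_goal \<tau> (subst_goal \<sigma> D)) \<longrightarrow>
            holds_goal (subst_goal \<tau> (subst_goal \<sigma> D))))"

definition guard :: "('p,'f,'v) clause \<Rightarrow> ('p,'f,'v) goal" where
  "guard C = takeWhile is_neq (cl_body C)"

fun mutex_apart :: "'p mode \<Rightarrow> ('p,'f,'v) clause \<Rightarrow> ('p,'f,'v) clause \<Rightarrow> bool" where
  "mutex_apart M (Clause p1 ts1 B1) (Clause p2 ts2 B2) \<longleftrightarrow>
     ((p1, length ts1) = (p2, length ts2) \<longrightarrow>
       (let t1 = input_args M p1 ts1; t2 = input_args M p2 ts2 in
         \<not> unifiable_list t1 t2 \<or>
         (\<exists>\<theta>. is_mgu_list \<theta> t1 t2 \<and>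
              \<not> satisfiable_wrt (subst_goal \<theta> (guard (Clause p1 ts1 B1) @ guard (Clause p2 ts2 B2)))
                                (vars_trms t1 \<union> vars_trms t2))))"

definition mutex :: "'p mode \<Rightarrow> ('p,'f,'v) clause \<Rightarrow> ('p,'f,'v) clause \<Rightarrow> bool" where
  "mutex M C1 C2 \<longleftrightarrow> (\<forall>C1' C2'. variant_cl C1' C1 \<longrightarrow> variant_cl C2' C2 \<longrightarrow>
      vars_cl C1' \<inter> vars_cl C2' = {} \<longrightarrow> mutex_apart M C1' C2')"

end

theory Submission
  imports Defs "HOL-Combinatorics.Transposition"
begin

(* Up to renaming this is deterministic: if both
   derivations use the same clause, corresponding goals are instances of each other, so the
   final goals are variants. If they use different clauses, neither is a unit clause (a unit
   clause would leave a basic goal), so the clauses are mutually exclusive. But both guards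
   were passed, and by safety every variable of a guard is either an input variable, bound to
   a ground input argument of A0, or untouched by the resolution step; so each guard is passed
   under the input bindings alone. Binding the input variables of both renamed-apart clauses
   at once therefore satisfies the conjunction of the guards, contradicting mutual
   exclusion. *)

section \<open>Substitutions\<close>

definition comp_subst :: "('f,'v) subst \<Rightarrow> ('f,'v) subst \<Rightarrow> ('f,'v) subst" (infixl "\<circ>\<^sub>s" 55)
  where "\<sigma> \<circ>\<^sub>s \<tau> = (\<lambda>x. subst_trm \<sigma> (\<tau> x))"

abbreviation renaming :: "('v \<Rightarrow> 'v) \<Rightarrow> ('f,'v) subst"
  where "renaming \<pi> \<equiv> \<lambda>x. Var (\<pi> x)"

lemma map_fixed_elem: "map f xs = xs \<Longrightarrow> x \<in> set xs \<Longrightarrow> f x = x"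
  using map_eq_conv[of f xs id] by simp

lemma subst_trm_comp: "subst_trm \<sigma> (subst_trm \<tau> t) = subst_trm (\<sigma> \<circ>\<^sub>s \<tau>) t"
  by (induction t) (auto simp: comp_subst_def)

lemma comp_subst_assoc: "\<sigma> \<circ>\<^sub>s (\<tau> \<circ>\<^sub>s \<rho>) = (\<sigma> \<circ>\<^sub>s \<tau>) \<circ>\<^sub>s \<rho>"
  by (simp add: comp_subst_def subst_trm_comp)

lemma subst_trm_cong: "(\<And>x. x \<in> vars_trm t \<Longrightarrow> \<sigma> x = \<tau> x) \<Longrightarrow> subst_trm \<sigma> t = subst_trm \<tau> t"
  by (induction t) auto

lemma subst_trm_Var [simp]: "subst_trm Var t = t"
  by (induction t) (auto intro: map_idI)

lemma vars_subst_trm: "vars_trm (subst_trm \<sigma> t) = (\<Union>x\<in>vars_trm t. vars_trm (\<sigma> x))"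
  by (induction t) auto

lemma finite_vars_trm [simp]: "finite (vars_trm t)"
  by (induction t) auto

lemma subst_trm_ground: "ground_trm t \<Longrightarrow> subst_trm \<sigma> t = t"
  using subst_trm_cong[of t \<sigma> Var] by (auto simp: ground_trm_def)

lemma ground_trm_subst_var: "ground_trm (subst_trm \<sigma> t) \<Longrightarrow> x \<in> vars_trm t \<Longrightarrow> ground_trm (\<sigma> x)"
  by (auto simp: ground_trm_def vars_subst_trm)

lemma subst_trm_fixed_var: "subst_trm \<sigma> t = t \<Longrightarrow> x \<in> vars_trm t \<Longrightarrow> \<sigma> x = Var x"
  by (induction t) (auto dest: map_fixed_elem)

lemma vars_trms_map: "vars_trms (map (subst_trm \<sigma>) ts) = (\<Union>x\<in>vars_trms ts. vars_trm (\<sigma> x))"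
  by (auto simp: vars_trms_def vars_subst_trm)

lemma finite_vars_trms [simp]: "finite (vars_trms ts)"
  by (simp add: vars_trms_def)

lemma ground_trms_subst_var:
  "\<forall>t\<in>set (map (subst_trm \<sigma>) ts). ground_trm t \<Longrightarrow> x \<in> vars_trms ts \<Longrightarrow> ground_trm (\<sigma> x)"
  by (auto simp: vars_trms_def intro: ground_trm_subst_var)

lemma subst_atm_comp: "subst_atm \<sigma> (subst_atm \<tau> A) = subst_atm (\<sigma> \<circ>\<^sub>s \<tau>) A"
  by (cases A) (auto simp: subst_trm_comp)

lemma subst_atm_cong: "(\<And>x. x \<in> vars_atm A \<Longrightarrow> \<sigma> x = \<tau> x) \<Longrightarrow> subst_atm \<sigma> A = subst_atm \<tau> A"
  by (cases A) (auto simp: vars_trms_def intro: subst_trm_cong)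

lemma vars_subst_atm: "vars_atm (subst_atm \<sigma> A) = (\<Union>x\<in>vars_atm A. vars_trm (\<sigma> x))"
  by (cases A) (auto simp: vars_subst_trm vars_trms_map)

lemma finite_vars_atm [simp]: "finite (vars_atm A)"
  by (cases A) auto

lemma basic_subst_atm [simp]: "basic_atm (subst_atm \<sigma> A) = basic_atm A"
  by (cases A) auto

lemma is_neq_subst_atm [simp]: "is_neq (subst_atm \<sigma> A) = is_neq A"
  by (cases A) auto

lemma subst_atm_fixed_var: "subst_atm \<sigma> A = A \<Longrightarrow> x \<in> vars_atm A \<Longrightarrow> \<sigma> x = Var x"
  by (cases A) (auto simp: vars_trms_def dest: map_fixed_elem subst_trm_fixed_var)

lemma subst_goal_simps [simp]:
  "subst_goal \<sigma> [] = []"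
  "subst_goal \<sigma> (A # G) = subst_atm \<sigma> A # subst_goal \<sigma> G"
  "subst_goal \<sigma> (G @ H) = subst_goal \<sigma> G @ subst_goal \<sigma> H"
  by (auto simp: subst_goal_def)

lemma vars_goal_simps [simp]:
  "vars_goal [] = {}"
  "vars_goal (A # G) = vars_atm A \<union> vars_goal G"
  "vars_goal (G @ H) = vars_goal G \<union> vars_goal H"
  by (auto simp: vars_goal_def)

lemma finite_vars_goal [simp]: "finite (vars_goal G)"
  by (simp add: vars_goal_def)

lemma subst_goal_comp: "subst_goal \<sigma> (subst_goal \<tau> G) = subst_goal (\<sigma> \<circ>\<^sub>s \<tau>) G"
  by (simp add: subst_goal_def subst_atm_comp)

lemma subst_goal_cong: "(\<And>x. x \<in> vars_goal G \<Longrightarrow> \<sigma> x = \<tau> x) \<Longrightarrow> subst_goal \<sigma> G = subst_goal \<tau> G"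
  by (auto simp: subst_goal_def vars_goal_def intro: subst_atm_cong)

lemma subst_atm_Var [simp]: "subst_atm Var A = A"
  by (cases A) (auto intro: map_idI)

lemma subst_goal_Var [simp]: "subst_goal Var G = G"
  by (simp add: subst_goal_def map_idI)

lemma vars_subst_goal: "vars_goal (subst_goal \<sigma> G) = (\<Union>x\<in>vars_goal G. vars_trm (\<sigma> x))"
  by (induction G) (auto simp: vars_subst_atm)

lemma subst_goal_fixed_var: "subst_goal \<sigma> G = G \<Longrightarrow> x \<in> vars_goal G \<Longrightarrow> \<sigma> x = Var x"
  by (auto simp: subst_goal_def vars_goal_def dest: map_fixed_elem subst_atm_fixed_var)

lemma cl_head_subst_cl [simp]: "cl_head (subst_cl \<sigma> C) = subst_atm \<sigma> (cl_head C)"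
  by (cases C) auto

lemma cl_body_subst_cl [simp]: "cl_body (subst_cl \<sigma> C) = subst_goal \<sigma> (cl_body C)"
  by (cases C) auto

lemma subst_cl_comp: "subst_cl \<sigma> (subst_cl \<tau> C) = subst_cl (\<sigma> \<circ>\<^sub>s \<tau>) C"
  by (cases C) (auto simp: subst_trm_comp subst_goal_comp)

lemma subst_cl_cong: "(\<And>x. x \<in> vars_cl C \<Longrightarrow> \<sigma> x = \<tau> x) \<Longrightarrow> subst_cl \<sigma> C = subst_cl \<tau> C"
  by (cases C) (auto simp: vars_cl_def vars_trms_def intro: subst_trm_cong subst_goal_cong)

lemma vars_subst_cl: "vars_cl (subst_cl \<sigma> C) = (\<Union>x\<in>vars_cl C. vars_trm (\<sigma> x))"
  by (auto simp: vars_cl_def vars_subst_atm vars_subst_goal)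

lemma finite_vars_cl [simp]: "finite (vars_cl C)"
  by (simp add: vars_cl_def)

lemma input_args_map: "input_args M p (map f ts) = map f (input_args M p ts)"
proof -
  have "map snd (filter fst (zip ms (map f ts))) = map f (map snd (filter fst (zip ms ts)))"
    for ms :: "bool list"
    by (induction ms ts rule: list_induct2') auto
  then show ?thesis
    by (simp add: input_args_def)
qed

lemma guard_subst_cl: "guard (subst_cl \<sigma> C) = subst_goal \<sigma> (guard C)"
  by (simp add: guard_def subst_goal_def takeWhile_map o_def)

section \<open>Unifiers\<close>

lemma mgu_factor:
  assumes "is_mgu_list \<theta> ss ts" and "map (subst_trm \<sigma>) ss = map (subst_trm \<sigma>) ts"
  obtains \<eta> where "\<sigma> = \<eta> \<circ>\<^sub>s \<theta>"
  using assms unfolding is_mgu_list_def comp_subst_def by fast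

lemma mgu_absorbs_unifier:
  assumes "is_mgu_list \<theta> ss ts" and "map (subst_trm \<sigma>) ss = map (subst_trm \<sigma>) ts"
  shows "\<sigma> \<circ>\<^sub>s \<theta> = \<sigma>"
proof -
  obtain \<eta> where \<sigma>: "\<sigma> = \<eta> \<circ>\<^sub>s \<theta>"
    using assms by (rule mgu_factor)
  have "\<theta> \<circ>\<^sub>s \<theta> = \<theta>"
    using assms(1) by (simp add: is_mgu_list_def comp_subst_def)
  then show ?thesis
    by (simp add: \<sigma> comp_subst_assoc[symmetric])
qed

lemma mgu_fixes_other_vars:
  "is_mgu_list \<theta> ss ts \<Longrightarrow> x \<notin> vars_trms ss \<Longrightarrow> x \<notin> vars_trms ts \<Longrightarrow> \<theta> x = Var x"
  unfolding is_mgu_list_def subst_dom_def by blast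

definition nonunifiable_diseqs :: "('p,'f,'v) goal \<Rightarrow> bool" where
  "nonunifiable_diseqs D \<longleftrightarrow> (\<forall>A\<in>set D. \<exists>a b. A = Neq a b \<and> \<not> unifiable_list [a] [b])"

lemma nonunifiable_diseqs_append [simp]:
  "nonunifiable_diseqs (D @ E) \<longleftrightarrow> nonunifiable_diseqs D \<and> nonunifiable_diseqs E"
  by (auto simp: nonunifiable_diseqs_def)

lemma nonunifiable_diseqs_subst:
  assumes "nonunifiable_diseqs D"
  shows "nonunifiable_diseqs (subst_goal \<sigma> D)"
proof -
  have "\<not> unifiable_list [subst_trm \<sigma> a] [subst_trm \<sigma> b]" if "\<not> unifiable_list [a] [b]" for a b
    using that by (auto simp: unifiable_list_def subst_trm_comp)
  then show ?thesis
    using assms by (fastforce simp: nonunifiable_diseqs_def subst_goal_def)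
qed

lemma nonunifiable_diseqs_holds: "nonunifiable_diseqs D \<Longrightarrow> holds_goal D"
  unfolding nonunifiable_diseqs_def holds_goal_def unifiable_list_def
  by (metis holds_atm.simps(2) length_Cons list.simps(9) subst_trm_Var)

section \<open>Renamings and variants\<close>

lemma inj_on_extend_to_bij:
  fixes f :: "'a \<Rightarrow> 'a"
  assumes "finite S" and "inj_on f S"
  obtains \<pi> where "bij \<pi>" and "\<And>x. x \<in> S \<Longrightarrow> \<pi> x = f x"
proof -
  have "\<exists>\<pi>. bij \<pi> \<and> (\<forall>x\<in>S. \<pi> x = f x)"
    using assms
  proof (induction S rule: finite_induct)
    case empty
    show ?case
      using bij_id by blast
  next
    case (insert x S)
    then obtain \<pi> where \<pi>: "bij \<pi>" "\<forall>y\<in>S. \<pi> y = f y"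
      by auto
    define \<pi>' where "\<pi>' = Transposition.transpose (f x) (\<pi> x) \<circ> \<pi>"
    have "\<pi>' y = f y" if "y \<in> S" for y
    proof -
      have "\<pi> y \<noteq> \<pi> x"
        using \<pi>(1) \<open>x \<notin> S\<close> that by (metis bij_is_inj injD)
      moreover have "f y \<noteq> f x"
        using insert.hyps(2) insert.prems that by (auto simp: inj_on_def)
      ultimately show ?thesis
        using \<pi>(2) that by (simp add: \<pi>'_def transpose_def)
    qed
    moreover have "bij \<pi>'"
      using \<pi>(1) by (simp add: \<pi>'_def bij_comp)
    ultimately show ?case
      by (auto simp: \<pi>'_def)
  qed
  then show ?thesis
    using that by blast
qed

lemma fresh_bij:
  fixes S T :: "'a set"
  assumes "finite S" and "finite T" and "infinite (UNIV :: 'a set)"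
  obtains \<kappa> where "bij \<kappa>" and "\<kappa> ` S \<inter> T = {}"
proof -
  obtain U where U: "finite U" "card U = card S" "U \<subseteq> - T"
    using infinite_arbitrarily_large[of "- T" "card S"] assms(2,3) by auto
  then obtain h where h: "bij_betw h S U"
    using assms(1) finite_same_card_bij by metis
  then obtain \<kappa> where "bij \<kappa>" and \<kappa>: "\<And>x. x \<in> S \<Longrightarrow> \<kappa> x = h x"
    using assms(1) bij_betw_imp_inj_on inj_on_extend_to_bij by metis
  moreover have "\<kappa> ` S \<inter> T = {}"
    using h U(3) \<kappa> bij_betw_imp_surj_on by fastforce
  ultimately show ?thesis
    using that by blast
qed

lemma vars_rename_cl: "vars_cl (subst_cl (renaming \<pi>) C) = \<pi> ` vars_cl C"
  by (auto simp: vars_subst_cl)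

lemma variant_cl_rename:
  assumes "variant_cl C' C" and "bij \<kappa>"
  shows "variant_cl (subst_cl (renaming \<kappa>) C') C"
proof -
  obtain \<pi> where "bij \<pi>" and C': "C' = subst_cl (renaming \<pi>) C"
    using assms(1) by (auto simp: variant_cl_def)
  have "subst_cl (renaming \<kappa>) C' = subst_cl (renaming (\<kappa> \<circ> \<pi>)) C"
    by (simp add: C' subst_cl_comp comp_subst_def)
  moreover have "bij (\<kappa> \<circ> \<pi>)"
    using \<open>bij \<pi>\<close> assms(2) by (rule bij_comp)
  ultimately show ?thesis
    by (auto simp: variant_cl_def)
qed

lemma variants_related_by_renaming:
  assumes "variant_cl C1 C" and "variant_cl C2 C"
  obtains \<pi> where "C2 = subst_cl (renaming \<pi>) C1"
proof -
  obtain \<pi>1 \<pi>2 where "bij \<pi>1" "C1 = subst_cl (renaming \<pi>1) C" "C2 = subst_cl (renaming \<pi>2) C"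
    using assms by (auto simp: variant_cl_def)
  then have "C2 = subst_cl (renaming (\<pi>2 \<circ> inv \<pi>1)) C1"
    by (simp add: subst_cl_comp comp_subst_def bij_is_inj)
  then show ?thesis
    using that by blast
qed

definition instance_goal :: "('p,'f,'v) goal \<Rightarrow> ('p,'f,'v) goal \<Rightarrow> bool" where
  "instance_goal H G \<longleftrightarrow> (\<exists>\<tau>. H = subst_goal \<tau> G)"

lemma instance_goal_refl [simp]: "instance_goal G G"
  by (metis instance_goal_def subst_goal_Var)

lemma instance_goal_basic_head_iff:
  "instance_goal H G \<Longrightarrow> (H \<noteq> [] \<and> basic_atm (hd H)) \<longleftrightarrow> (G \<noteq> [] \<and> basic_atm (hd G))"
  by (cases G) (auto simp: instance_goal_def)

lemma variant_goal_if_instances: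
  assumes "instance_goal G' G" and "instance_goal G G'"
  shows "variant_goal G' G"
proof -
  obtain \<tau> \<tau>' where G': "G' = subst_goal \<tau> G" and G: "G = subst_goal \<tau>' G'"
    using assms by (auto simp: instance_goal_def)
  have "subst_goal (\<tau>' \<circ>\<^sub>s \<tau>) G = G"
    using G G' by (simp add: subst_goal_comp)
  then have \<tau>_inverse: "subst_trm \<tau>' (\<tau> x) = Var x" if "x \<in> vars_goal G" for x
    using subst_goal_fixed_var that by (fastforce simp: comp_subst_def)
  define f where "f x = (case \<tau> x of Var y \<Rightarrow> y | _ \<Rightarrow> x)" for x
  have \<tau>: "\<tau> x = Var (f x)" and \<tau>': "\<tau>' (f x) = Var x" if "x \<in> vars_goal G" for x
    using \<tau>_inverse[OF that] by (cases "\<tau> x"; simp add: f_def)+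
  have "inj_on f (vars_goal G)"
    by (metis \<tau>' inj_onI trm.inject(1))
  then obtain \<pi> where "bij \<pi>" and \<pi>: "\<And>x. x \<in> vars_goal G \<Longrightarrow> \<pi> x = f x"
    using inj_on_extend_to_bij finite_vars_goal by metis
  have "G' = subst_goal (renaming \<pi>) G"
    unfolding G' using \<tau> \<pi> by (auto intro: subst_goal_cong)
  with \<open>bij \<pi>\<close> show ?thesis
    by (auto simp: variant_goal_def)
qed

section \<open>Derivations\<close>

lemma basic_step_hd: "basic_step G H \<Longrightarrow> G \<noteq> [] \<and> basic_atm (hd G)"
  by (auto simp: basic_step_def)

lemma clause_step_hd: "clause_step C G H \<Longrightarrow> G \<noteq> [] \<and> \<not> basic_atm (hd G)"
  by (auto simp: clause_step_def)

lemma basic_step_Neq_iff: "basic_step (Neq a b # G) H \<longleftrightarrow> H = G \<and> \<not> unifiable_list [a] [b]"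
  by (auto simp: basic_step_def)

lemma is_mgu_atmE:
  assumes "is_mgu_atm \<theta> A B"
  obtains p ss ts where "A = Pred p ss" and "B = Pred p ts" and "is_mgu_list \<theta> ss ts"
  using assms by (cases A; cases B) auto

lemma basic_step_instance:
  assumes "basic_step G H" and "basic_step G' H'" and "instance_goal G' G"
  shows "instance_goal H' H"
proof -
  obtain \<tau> where G': "G' = subst_goal \<tau> G"
    using assms(3) by (auto simp: instance_goal_def)
  from assms(1) show ?thesis
    unfolding basic_step_def
  proof (elim disjE exE conjE)
    fix t1 t2 R \<theta>
    assume G: "G = Eq t1 t2 # R" and \<theta>: "is_mgu_list \<theta> [t1] [t2]" and H: "H = subst_goal \<theta> R"
    obtain \<theta>' where \<theta>': "is_mgu_list \<theta>' [subst_trm \<tau> t1] [subst_trm \<tau> t2]"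
      and H': "H' = subst_goal \<theta>' (subst_goal \<tau> R)"
      using assms(2) by (auto simp: basic_step_def G' G)
    have "map (subst_trm (\<theta>' \<circ>\<^sub>s \<tau>)) [t1] = map (subst_trm (\<theta>' \<circ>\<^sub>s \<tau>)) [t2]"
      using \<theta>' by (simp add: is_mgu_list_def subst_trm_comp)
    then obtain \<eta> where "\<theta>' \<circ>\<^sub>s \<tau> = \<eta> \<circ>\<^sub>s \<theta>"
      using \<theta> by (metis mgu_factor)
    then have "H' = subst_goal \<eta> H"
      by (simp add: H H' subst_goal_comp)
    then show ?thesis
      by (auto simp: instance_goal_def)
  next
    fix t1 t2
    assume "G = Neq t1 t2 # H"
    then have "H' = subst_goal \<tau> H"
      using assms(2) by (simp add: G' basic_step_Neq_iff)
    then show ?thesis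
      by (auto simp: instance_goal_def)
  qed
qed

lemma clause_step_instance:
  assumes "clause_step C G H" and "clause_step C G' H'" and "instance_goal G' G"
  shows "instance_goal H' H"
proof -
  obtain \<tau> where G': "G' = subst_goal \<tau> G"
    using assms(3) by (auto simp: instance_goal_def)
  obtain A R C1 \<theta>1 where G: "G = A # R" and C1: "variant_cl C1 C"
    and apart: "vars_cl C1 \<inter> vars_goal G = {}" and \<theta>1: "is_mgu_atm \<theta>1 A (cl_head C1)"
    and H: "H = subst_goal \<theta>1 (cl_body C1 @ R)"
    using assms(1) by (auto simp: clause_step_def)
  obtain C2 \<theta>2 where C2: "variant_cl C2 C" and \<theta>2: "is_mgu_atm \<theta>2 (subst_atm \<tau> A) (cl_head C2)"
    and H': "H' = subst_goal \<theta>2 (cl_body C2 @ subst_goal \<tau> R)"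
    using assms(2) by (auto simp: clause_step_def G' G)
  obtain \<pi> where C2_C1: "C2 = subst_cl (renaming \<pi>) C1"
    using C1 C2 by (rule variants_related_by_renaming)
  \<comment> \<open>As C1 is renamed apart from G, a single substitution maps C1 to C2 and G to G'.\<close>
  define \<sigma> where "\<sigma> x = (if x \<in> vars_cl C1 then Var (\<pi> x) else \<tau> x)" for x
  have \<sigma>_C1: "subst_cl \<sigma> C1 = C2"
    unfolding C2_C1 by (rule subst_cl_cong) (simp add: \<sigma>_def)
  have \<sigma>_G: "subst_goal \<sigma> G = subst_goal \<tau> G"
    using apart by (intro subst_goal_cong) (auto simp: \<sigma>_def)
  obtain p ss ts where A: "A = Pred p ss" and hd1: "cl_head C1 = Pred p ts"
    and mgu1: "is_mgu_list \<theta>1 ss ts"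
    using \<theta>1 by (rule is_mgu_atmE)
  have "is_mgu_atm \<theta>2 (subst_atm \<sigma> A) (subst_atm \<sigma> (cl_head C1))"
    using \<theta>2 \<sigma>_C1 \<sigma>_G by (auto simp: G)
  then have "map (subst_trm (\<theta>2 \<circ>\<^sub>s \<sigma>)) ss = map (subst_trm (\<theta>2 \<circ>\<^sub>s \<sigma>)) ts"
    by (simp add: A hd1 is_mgu_list_def subst_trm_comp o_def)
  then obtain \<eta> where \<eta>: "\<theta>2 \<circ>\<^sub>s \<sigma> = \<eta> \<circ>\<^sub>s \<theta>1"
    using mgu1 by (metis mgu_factor)
  have "H' = subst_goal \<theta>2 (subst_goal \<sigma> (cl_body C1 @ R))"
    using \<sigma>_C1 \<sigma>_G by (auto simp: H' G)
  also have "\<dots> = subst_goal \<eta> H"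
    by (simp add: H subst_goal_comp \<eta>)
  finally show ?thesis
    by (auto simp: instance_goal_def)
qed

lemma derives_C_run:
  assumes "derives_C P C G G'"
  obtains n f where "0 < n" and "f 0 = G" and "f n = G'" and "clause_step C G (f 1)"
    and "\<And>i. 0 < i \<Longrightarrow> i < n \<Longrightarrow> basic_step (f i) (f (Suc i))"
    and "G' = [] \<or> \<not> basic_atm (hd G')"
proof -
  obtain n f where "0 < n" "f 0 = G" "f n = G'" "clause_step C G (f 1)"
    and steps: "\<forall>i<n. step P (f i) (f (Suc i))"
    and basic: "\<forall>i. 0 < i \<and> i < n \<longrightarrow> f i \<noteq> [] \<and> basic_atm (hd (f i))"
    and "G' = [] \<or> \<not> basic_atm (hd G')"
    using assms unfolding derives_C_def by metis
  moreover have "basic_step (f i) (f (Suc i))" if "0 < i" "i < n" for i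
    using steps basic that clause_step_hd unfolding step_def by blast
  ultimately show ?thesis
    using that by blast
qed

lemma derives_C_instance:
  assumes "derives_C P C G G1" and "derives_C P C G G2"
  shows "instance_goal G2 G1"
proof -
  obtain n f where "0 < n" and f0: "f 0 = G" and fn: "f n = G1" and f1: "clause_step C G (f 1)"
    and f_basic: "\<And>i. 0 < i \<Longrightarrow> i < n \<Longrightarrow> basic_step (f i) (f (Suc i))"
    and G1: "G1 = [] \<or> \<not> basic_atm (hd G1)"
    using derives_C_run[OF assms(1)] by blast
  obtain m g where "0 < m" and g0: "g 0 = G" and gm: "g m = G2" and g1: "clause_step C G (g 1)"
    and g_basic: "\<And>i. 0 < i \<Longrightarrow> i < m \<Longrightarrow> basic_step (g i) (g (Suc i))"
    and G2: "G2 = [] \<or> \<not> basic_atm (hd G2)"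
    using derives_C_run[OF assms(2)] by blast
  have inst: "instance_goal (g i) (f i)" if "i \<le> n" "i \<le> m" for i
    using that
  proof (induction i)
    case 0
    show ?case
      by (simp add: f0 g0)
  next
    case (Suc i)
    show ?case
    proof (cases "i = 0")
      case True
      show ?thesis
        using clause_step_instance[OF f1 g1] True by simp
    next
      case False
      then show ?thesis
        using Suc by (intro basic_step_instance[OF f_basic g_basic]) auto
    qed
  qed
  \<comment> \<open>Both derivations stop at the first goal whose head is not basic, so they have equal length.\<close>
  have "\<not> n < m"
  proof
    assume "n < m"
    then have "g n \<noteq> [] \<and> basic_atm (hd (g n))"
      using g_basic \<open>0 < n\<close> basic_step_hd by blast
    then show False
      using instance_goal_basic_head_iff[OF inst[of n]] \<open>n < m\<close> G1 fn by auto
  qed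
  moreover have "\<not> m < n"
  proof
    assume "m < n"
    then have "f m \<noteq> [] \<and> basic_atm (hd (f m))"
      using f_basic \<open>0 < m\<close> basic_step_hd by blast
    then show False
      using instance_goal_basic_head_iff[OF inst[of m]] \<open>m < n\<close> G2 gm by auto
  qed
  ultimately show ?thesis
    using inst[of n] fn gm by simp
qed

lemma basic_goal_subst [simp]: "basic_goal (subst_goal \<sigma> G) = basic_goal G"
  by (auto simp: basic_goal_def subst_goal_def)

lemma basic_goal_append [simp]: "basic_goal (G @ H) \<longleftrightarrow> basic_goal G \<and> basic_goal H"
  by (auto simp: basic_goal_def)

lemma basic_step_basic_goal: "basic_step G H \<Longrightarrow> basic_goal G \<Longrightarrow> basic_goal H"
  by (auto simp: basic_step_def basic_goal_def subst_goal_def)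

lemma derives_C_unit_clause_basic_goal:
  assumes "derives_C P C (A # G) G'" and "unit_clause C" and "basic_goal G"
  shows "basic_goal G'"
proof -
  obtain n f where "0 < n" and fn: "f n = G'" and f1: "clause_step C (A # G) (f 1)"
    and f_basic: "\<And>i. 0 < i \<Longrightarrow> i < n \<Longrightarrow> basic_step (f i) (f (Suc i))"
    using derives_C_run[OF assms(1)] by blast
  have "basic_goal (f 1)"
    using f1 assms(2,3) by (auto simp: clause_step_def variant_cl_def unit_clause_def)
  have "basic_goal (f i)" if "1 \<le> i" and "i \<le> n" for i
    using that(1)
  proof (induction rule: dec_induct)
    case base
    show ?case
      by fact
  next
    case (step k)
    then have "basic_step (f k) (f (Suc k))"
      using f_basic that(2) by simp
    then show ?case
      using basic_step_basic_goal step.IH by blast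
  qed
  from this[of n] show ?thesis
    using \<open>0 < n\<close> fn by simp
qed

lemma basic_run_nonunifiable_diseqs:
  assumes "\<And>i. i < n \<Longrightarrow> basic_step (f i) (f (Suc i))" and "f 0 = D @ R"
    and "\<forall>A\<in>set D. is_neq A" and "f n = [] \<or> \<not> basic_atm (hd (f n))"
  shows "nonunifiable_diseqs D"
  using assms
proof (induction D arbitrary: f n)
  case Nil
  show ?case
    by (simp add: nonunifiable_diseqs_def)
next
  case (Cons A D)
  then obtain a b where A: "A = Neq a b"
    by (cases A) auto
  have "n \<noteq> 0"
    using Cons.prems(2,4) A by (cases n) auto
  then have "basic_step (f 0) (f 1)"
    using Cons.prems(1) by simp
  then have f1: "f 1 = D @ R" and "\<not> unifiable_list [a] [b]"
    using Cons.prems(2) A by (simp_all add: basic_step_Neq_iff)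
  moreover have "nonunifiable_diseqs D"
    using Cons.prems Cons.IH[of "n - 1" "\<lambda>i. f (Suc i)"] \<open>n \<noteq> 0\<close> f1 by simp
  ultimately show ?case
    using A by (auto simp: nonunifiable_diseqs_def)
qed

lemma derives_C_guard:
  assumes "derives_C P C (A # G) G'"
  obtains C' \<theta> where "variant_cl C' C" and "vars_cl C' \<inter> vars_goal (A # G) = {}"
    and "is_mgu_atm \<theta> A (cl_head C')" and "nonunifiable_diseqs (subst_goal \<theta> (guard C'))"
proof -
  obtain n f where "0 < n" and fn: "f n = G'" and f1: "clause_step C (A # G) (f 1)"
    and f_basic: "\<And>i. 0 < i \<Longrightarrow> i < n \<Longrightarrow> basic_step (f i) (f (Suc i))"
    and G': "G' = [] \<or> \<not> basic_atm (hd G')"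
    using derives_C_run[OF assms] by blast
  obtain C' \<theta> where "variant_cl C' C" and "vars_cl C' \<inter> vars_goal (A # G) = {}"
    and "is_mgu_atm \<theta> A (cl_head C')" and f1_eq: "f 1 = subst_goal \<theta> (cl_body C' @ G)"
    using f1 by (auto simp: clause_step_def)
  moreover have "nonunifiable_diseqs (subst_goal \<theta> (guard C'))"
  proof (rule basic_run_nonunifiable_diseqs)
    show "\<And>i. i < n - 1 \<Longrightarrow> basic_step (f (Suc i)) (f (Suc (Suc i)))"
      using f_basic by simp
    show "f (Suc 0) = subst_goal \<theta> (guard C') @ subst_goal \<theta> (dropWhile is_neq (cl_body C') @ G)"
      using f1_eq takeWhile_dropWhile_id[of is_neq "cl_body C'"]
      by (metis One_nat_def append_assoc guard_def subst_goal_simps(3))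
    show "\<forall>A\<in>set (subst_goal \<theta> (guard C')). is_neq A"
      by (auto simp: guard_def subst_goal_def dest: set_takeWhileD)
    show "f (Suc (n - 1)) = [] \<or> \<not> basic_atm (hd (f (Suc (n - 1))))"
      using \<open>0 < n\<close> fn G' by simp
  qed
  ultimately show ?thesis
    using that by blast
qed

section \<open>Guards\<close>

definition guard_safe :: "'p mode \<Rightarrow> ('p,'f,'v) clause \<Rightarrow> bool" where
  "guard_safe M C \<longleftrightarrow>
     (\<forall>x\<in>vars_goal (guard C). x \<in> head_input_vars M C \<or> x \<notin> vars_atm (cl_head C))"

lemma vars_guard_subset: "vars_goal (guard C) \<subseteq> vars_cl C"
  by (auto simp: guard_def vars_goal_def vars_cl_def dest: set_takeWhileD)

lemma head_input_vars_subst_cl: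
  "head_input_vars M (subst_cl \<sigma> C) = (\<Union>x\<in>head_input_vars M C. vars_trm (\<sigma> x))"
  by (cases C) (simp add: input_args_map vars_trms_map)

lemma vars_input_args_subset: "vars_trms (input_args M p ts) \<subseteq> vars_trms ts"
  by (auto simp: input_args_def vars_trms_def dest: set_zip_rightD)

lemma safe_clause_guard_safe:
  assumes "safe_clause M C"
  shows "guard_safe M C"
  unfolding guard_safe_def
proof
  fix x
  assume "x \<in> vars_goal (guard C)"
  then obtain i where i: "i < length (guard C)" and x: "x \<in> vars_atm (guard C ! i)"
    by (auto simp: vars_goal_def in_set_conv_nth)
  then have "is_neq (guard C ! i)"
    using nth_mem unfolding guard_def by (blast dest: set_takeWhileD)
  then obtain a b where "guard C ! i = Neq a b"
    by (cases "guard C ! i") auto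
  moreover have "i < length (cl_body C)" and "cl_body C ! i = guard C ! i"
    using i length_takeWhile_le[of is_neq "cl_body C"] by (auto simp: guard_def takeWhile_nth)
  ultimately have "x \<in> head_input_vars M C \<or> local_var C i x"
    using assms x by (auto simp: safe_clause_def)
  then show "x \<in> head_input_vars M C \<or> x \<notin> vars_atm (cl_head C)"
    by (auto simp: local_var_def)
qed

lemma guard_safe_rename:
  assumes "guard_safe M C" and "inj \<pi>"
  shows "guard_safe M (subst_cl (renaming \<pi>) C)"
  using assms
  by (fastforce simp: guard_safe_def guard_subst_cl vars_subst_goal vars_subst_atm
      head_input_vars_subst_cl dest: injD)

text \<open>Unlike the mgu of a resolution step, this is invariant
  under renaming C.\<close>
definition guard_passes ::
  "'p mode \<Rightarrow> ('p,'f,'v) atm \<Rightarrow> ('p,'f,'v) clause \<Rightarrow> ('f,'v) subst \<Rightarrow> bool" where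
  "guard_passes M A C \<gamma> \<longleftrightarrow>
     (\<exists>p ss ts B. A = Pred p ss \<and> C = Clause p ts B \<and> length ts = length ss \<and>
        map (subst_trm \<gamma>) (input_args M p ts) = input_args M p ss) \<and>
     (\<forall>w. (\<forall>x\<in>head_input_vars M C. w x = \<gamma> x) \<longrightarrow> nonunifiable_diseqs (subst_goal w (guard C)))"

lemma guard_passes_mgu:
  assumes mgu: "is_mgu_atm \<theta> A (cl_head C)" and apart: "vars_cl C \<inter> vars_atm A = {}"
    and safe: "guard_safe M C" and sat: "atm_sat M A"
    and guard: "nonunifiable_diseqs (subst_goal \<theta> (guard C))"
  shows "guard_passes M A C \<theta>"
proof -
  obtain p ss ts where A: "A = Pred p ss" and "cl_head C = Pred p ts" and mgu': "is_mgu_list \<theta> ss ts"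
    using mgu by (rule is_mgu_atmE)
  then obtain B where C: "C = Clause p ts B"
    by (cases C) auto
  have ground: "\<forall>t\<in>set (input_args M p ss). ground_trm t"
    using sat by (simp add: A)
  have inputs: "map (subst_trm \<theta>) (input_args M p ts) = input_args M p ss"
  proof -
    have "map (subst_trm \<theta>) (input_args M p ts) = map (subst_trm \<theta>) (input_args M p ss)"
      using mgu' by (simp add: is_mgu_list_def flip: input_args_map)
    also have "\<dots> = input_args M p ss"
      using ground by (simp add: subst_trm_ground map_idI)
    finally show ?thesis .
  qed
  have "nonunifiable_diseqs (subst_goal w (guard C))"
    if w: "\<forall>x\<in>head_input_vars M C. w x = \<theta> x" for w
  proof -
    \<comment> \<open>\<theta> grounds the input variables of the guard and fixes all its other variables.\<close>
    have "w x = subst_trm w (\<theta> x)" if x: "x \<in> vars_goal (guard C)" for x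
    proof (cases "x \<in> head_input_vars M C")
      case True
      then have "ground_trm (\<theta> x)"
        using inputs ground ground_trms_subst_var[of \<theta> "input_args M p ts" x] by (simp add: C)
      then show ?thesis
        using w True by (simp add: subst_trm_ground)
    next
      case False
      then have "x \<notin> vars_trms ts"
        using safe x by (auto simp: guard_safe_def C)
      moreover have "x \<notin> vars_trms ss"
        using apart x vars_guard_subset[of C] by (auto simp: A)
      ultimately show ?thesis
        using mgu' by (simp add: mgu_fixes_other_vars)
    qed
    then have "subst_goal w (guard C) = subst_goal w (subst_goal \<theta> (guard C))"
      unfolding subst_goal_comp by (intro subst_goal_cong) (simp add: comp_subst_def)
    then show ?thesis
      using guard nonunifiable_diseqs_subst by metis
  qed
  then show ?thesis
    using inputs mgu' by (auto simp: guard_passes_def A C is_mgu_list_def)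
qed

lemma derives_C_guard_passes:
  assumes "derives_C P C (A # G) G'" and "safe_clause M C" and "atm_sat M A"
  obtains C' \<gamma> where "variant_cl C' C" and "guard_passes M A C' \<gamma>"
proof -
  obtain C' \<theta> where C': "variant_cl C' C" and apart: "vars_cl C' \<inter> vars_goal (A # G) = {}"
    and "is_mgu_atm \<theta> A (cl_head C')" and "nonunifiable_diseqs (subst_goal \<theta> (guard C'))"
    using assms(1) by (rule derives_C_guard)
  moreover have "guard_safe M C'"
    using C' safe_clause_guard_safe[OF assms(2)]
    by (auto simp: variant_cl_def bij_is_inj intro: guard_safe_rename)
  moreover have "vars_cl C' \<inter> vars_atm A = {}"
    using apart by auto
  ultimately show ?thesis
    using that assms(3) guard_passes_mgu by blast
qed

lemma guard_passes_subst_cl: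
  assumes "guard_passes M A C (\<gamma> \<circ>\<^sub>s \<rho>)"
  shows "guard_passes M A (subst_cl \<rho> C) \<gamma>"
proof -
  obtain p ss ts B where A: "A = Pred p ss" and C: "C = Clause p ts B" and "length ts = length ss"
    and inputs: "map (subst_trm (\<gamma> \<circ>\<^sub>s \<rho>)) (input_args M p ts) = input_args M p ss"
    and guard: "\<And>w. \<forall>x\<in>head_input_vars M C. w x = (\<gamma> \<circ>\<^sub>s \<rho>) x \<Longrightarrow>
      nonunifiable_diseqs (subst_goal w (guard C))"
    using assms by (auto simp: guard_passes_def)
  have "nonunifiable_diseqs (subst_goal w (guard (subst_cl \<rho> C)))"
    if w: "\<forall>x\<in>head_input_vars M (subst_cl \<rho> C). w x = \<gamma> x" for w
  proof -
    have "\<forall>x\<in>head_input_vars M C. (w \<circ>\<^sub>s \<rho>) x = (\<gamma> \<circ>\<^sub>s \<rho>) x"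
      using w by (auto simp: comp_subst_def head_input_vars_subst_cl intro: subst_trm_cong)
    then show ?thesis
      using guard by (simp add: guard_subst_cl subst_goal_comp)
  qed
  moreover have "map (subst_trm \<gamma>) (input_args M p (map (subst_trm \<rho>) ts)) = input_args M p ss"
    using inputs by (simp add: input_args_map subst_trm_comp o_def)
  ultimately show ?thesis
    using \<open>length ts = length ss\<close> by (auto simp: guard_passes_def A C)
qed

lemma guard_passes_rename_apart:
  fixes C C' :: "('p,'f,'v) clause"
  assumes "infinite (UNIV :: 'v set)" and "finite V"
    and "variant_cl C' C" and "guard_passes M A C' \<gamma>"
  obtains C'' \<gamma>'' where "variant_cl C'' C" and "guard_passes M A C'' \<gamma>''"
    and "vars_cl C'' \<inter> V = {}"
proof -
  obtain \<kappa> :: "'v \<Rightarrow> 'v" where "bij \<kappa>" and fresh: "\<kappa> ` vars_cl C' \<inter> V = {}"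
    using fresh_bij[OF finite_vars_cl assms(2,1)] by blast
  have "(\<lambda>x. \<gamma> (inv \<kappa> x)) \<circ>\<^sub>s renaming \<kappa> = \<gamma>"
    using \<open>bij \<kappa>\<close> by (simp add: comp_subst_def bij_is_inj)
  then have "guard_passes M A (subst_cl (renaming \<kappa>) C') (\<lambda>x. \<gamma> (inv \<kappa> x))"
    using assms(4) by (intro guard_passes_subst_cl) simp
  moreover have "variant_cl (subst_cl (renaming \<kappa>) C') C"
    using assms(3) \<open>bij \<kappa>\<close> by (rule variant_cl_rename)
  moreover have "vars_cl (subst_cl (renaming \<kappa>) C') \<inter> V = {}"
    using fresh by (simp add: vars_rename_cl)
  ultimately show ?thesis
    using that by blast
qed

lemma guard_passes_not_mutex_apart:
  assumes "guard_passes M A C1 \<gamma>1" and "guard_passes M A C2 \<gamma>2"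
    and apart: "vars_cl C1 \<inter> vars_cl C2 = {}" and sat: "atm_sat M A"
  shows "\<not> mutex_apart M C1 C2"
proof
  assume mutex: "mutex_apart M C1 C2"
  obtain p ss ts1 B1 where A: "A = Pred p ss" and C1: "C1 = Clause p ts1 B1"
    and len1: "length ts1 = length ss"
    and inputs1: "map (subst_trm \<gamma>1) (input_args M p ts1) = input_args M p ss"
    and guard1: "\<And>w. \<forall>x\<in>head_input_vars M C1. w x = \<gamma>1 x \<Longrightarrow>
      nonunifiable_diseqs (subst_goal w (guard C1))"
    using assms(1) by (auto simp: guard_passes_def)
  obtain ts2 B2 where C2: "C2 = Clause p ts2 B2" and len2: "length ts2 = length ss"
    and inputs2: "map (subst_trm \<gamma>2) (input_args M p ts2) = input_args M p ss"
    and guard2: "\<And>w. \<forall>x\<in>head_input_vars M C2. w x = \<gamma>2 x \<Longrightarrow>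
      nonunifiable_diseqs (subst_goal w (guard C2))"
    using assms(2) by (auto simp: guard_passes_def A)
  define t1 t2 where "t1 = input_args M p ts1" and "t2 = input_args M p ts2"
  define V where "V = vars_trms t1 \<union> vars_trms t2"
  \<comment> \<open>The clauses are renamed apart, so \<sigma> can bind the input variables of both at once.\<close>
  define \<sigma> where "\<sigma> x = (if x \<in> vars_trms t1 then \<gamma>1 x else if x \<in> vars_trms t2 then \<gamma>2 x else Var x)"
    for x
  have "vars_trms t1 \<subseteq> vars_cl C1" and "vars_trms t2 \<subseteq> vars_cl C2"
    using vars_input_args_subset by (fastforce simp: t1_def t2_def C1 C2 vars_cl_def)+
  then have \<sigma>1: "\<forall>x\<in>vars_trms t1. \<sigma> x = \<gamma>1 x" and \<sigma>2: "\<forall>x\<in>vars_trms t2. \<sigma> x = \<gamma>2 x"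
    using apart by (auto simp: \<sigma>_def)
  have \<sigma>_t1: "map (subst_trm \<sigma>) t1 = input_args M p ss"
    unfolding inputs1[folded t1_def, symmetric] using \<sigma>1
    by (auto simp: vars_trms_def intro!: map_cong subst_trm_cong)
  have \<sigma>_t2: "map (subst_trm \<sigma>) t2 = input_args M p ss"
    unfolding inputs2[folded t2_def, symmetric] using \<sigma>2
    by (auto simp: vars_trms_def intro!: map_cong subst_trm_cong)
  then have "unifiable_list t1 t2"
    using \<sigma>_t1 unfolding unifiable_list_def by (metis length_map)
  then obtain \<theta> where \<theta>: "is_mgu_list \<theta> t1 t2"
    and unsat: "\<not> satisfiable_wrt (subst_goal \<theta> (guard C1 @ guard C2)) V"
    using mutex len1 len2 by (auto simp: C1 C2 t1_def t2_def V_def Let_def)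
  have \<sigma>\<theta>: "\<sigma> \<circ>\<^sub>s \<theta> = \<sigma>"
    using \<theta> by (rule mgu_absorbs_unifier) (simp add: \<sigma>_t1 \<sigma>_t2)
  have ground: "\<forall>t\<in>set (input_args M p ss). ground_trm t"
    using sat by (simp add: A)
  have "satisfiable_wrt (subst_goal \<theta> (guard C1 @ guard C2)) V"
    unfolding satisfiable_wrt_def
  proof (intro exI[of _ \<sigma>] conjI allI ballI impI)
    show "ground_trm (\<sigma> x)" if "x \<in> V" for x
      using that ground ground_trms_subst_var[of \<sigma> t1 x] ground_trms_subst_var[of \<sigma> t2 x]
      by (auto simp: V_def \<sigma>_t1 \<sigma>_t2)
    show "\<sigma> x = Var x" if "x \<notin> V" for x
      using that by (simp add: V_def \<sigma>_def)
    have "nonunifiable_diseqs (subst_goal \<sigma> (guard C1 @ guard C2))"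
      using guard1 guard2 \<sigma>1 \<sigma>2 by (simp add: C1 C2 t1_def t2_def)
    moreover have "subst_goal \<sigma> (subst_goal \<theta> (guard C1 @ guard C2)) = subst_goal \<sigma> (guard C1 @ guard C2)"
      by (simp add: subst_goal_comp \<sigma>\<theta>)
    ultimately show "holds_goal (subst_goal \<tau> (subst_goal \<sigma> (subst_goal \<theta> (guard C1 @ guard C2))))"
      for \<tau>
      by (metis nonunifiable_diseqs_holds nonunifiable_diseqs_subst)
  qed
  with unsat show False
    by contradiction
qed

theorem lemma16:
  fixes P :: "('p,'f,'v) clause set" and M :: "'p mode"
    and A0 A1 A1' :: "('p,'f,'v) atm" and G0 G1 G1' :: "('p,'f,'v) goal"
  assumes "infinite (UNIV :: 'f set)"
    and "infinite (UNIV :: 'v set)"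
    and "mode_for M P"
    and "safe_prog M P"
    and "prog_satisfies M P"
    and "\<forall>C1\<in>P. \<forall>C2\<in>P. C1 \<noteq> C2 \<longrightarrow> \<not> unit_clause C1 \<longrightarrow> \<not> unit_clause C2 \<longrightarrow> mutex M C1 C2"
    and "\<not> basic_atm A0" and "atm_sat M A0" and "basic_goal G0"
    and "\<not> basic_atm A1" and "derives P (A0 # G0) (A1 # G1)"
    and "\<not> basic_atm A1'" and "derives P (A0 # G0) (A1' # G1')"
  shows "variant_goal (A1' # G1') (A1 # G1)"
proof -
  \<comment> \<open>Only the resolution step with A0 and the evaluation of the guards matter.\<close>
  obtain C1 C2 where "C1 \<in> P" and d1: "derives_C P C1 (A0 # G0) (A1 # G1)"
    and "C2 \<in> P" and d2: "derives_C P C2 (A0 # G0) (A1' # G1')"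
    using assms(11,13) by (auto simp: derives_def)
  show ?thesis
  proof (cases "C1 = C2")
    case True
    then show ?thesis
      using d1 d2 by (simp add: derives_C_instance variant_goal_if_instances)
  next
    case False
    have "\<not> unit_clause C1" and "\<not> unit_clause C2"
      using derives_C_unit_clause_basic_goal d1 d2 assms(9,10,12) by (fastforce simp: basic_goal_def)+
    then have mutex: "mutex M C1 C2"
      using assms(6) \<open>C1 \<in> P\<close> \<open>C2 \<in> P\<close> False by blast
    have safe: "safe_clause M C1" "safe_clause M C2"
      using assms(4) \<open>C1 \<in> P\<close> \<open>C2 \<in> P\<close> by (auto simp: safe_prog_def)
    obtain C1' \<gamma>1 where C1': "variant_cl C1' C1" and guard1: "guard_passes M A0 C1' \<gamma>1"
      using d1 safe(1) assms(8) by (rule derives_C_guard_passes)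
    obtain C2' \<gamma>2 where "variant_cl C2' C2" and "guard_passes M A0 C2' \<gamma>2"
      using d2 safe(2) assms(8) by (rule derives_C_guard_passes)
    then obtain C2'' \<gamma>2'' where C2'': "variant_cl C2'' C2" and guard2: "guard_passes M A0 C2'' \<gamma>2''"
      and apart: "vars_cl C2'' \<inter> vars_cl C1' = {}"
      using guard_passes_rename_apart[OF assms(2) finite_vars_cl] by metis
    have "mutex_apart M C1' C2''"
      using mutex C1' C2'' apart by (auto simp: mutex_def)
    moreover have "\<not> mutex_apart M C1' C2''"
      using guard1 guard2 apart assms(8) by (intro guard_passes_not_mutex_apart) auto
    ultimately show ?thesis
      by contradiction
  qed
qed

end
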